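(* In the setting below, assume $$15.2\sqrt{\frac{\mathbb E\|X-\mu\|^4-(\mathrm{tr}(\Sigma))^2}{(\mathrm{tr}(\Sigma))^2}}\le\Big(\frac12-178\frac{\log(1.4/\delta)}{n}\Big)\sqrt{\frac{n}{\log(1.4/\delta)}}.$$ Then $\Pr\big(\mathrm{tr}(\Sigma)\le 2\hat T\big)\ge1-\delta$.
   Context: Let $\mathbb H$ be a separable Hilbert space. Let $X_1,\ldots,X_n\in\mathbb H$ be i.i.d. copies of $X$ with mean $\mu$, covariance operator $\Sigma$, $0<\mathrm{tr}(\Sigma)=\mathbb E\|X-\mu\|^2$, and $\mathbb E\|X-\mu\|^4<\infty$. Let $\alpha_\ast=7/18$ and $p_\ast=0.1$. For $0<p<a<\tfrac12$, $\psi(a;p)=(1-a)\log\frac{1-a}{1-p}+a\log\frac ap$. Given $\delta\in(0,1)$, set $k=\lfloor\log(1/\delta)/\psi(\alpha_\ast;p_\ast)\rfloor+1$, and assume $k\le n/2$. Split $\{1,\ldots,n\}$ into disjoint groups $G_1,\ldots,G_k$ of size $\lfloor n/k\rfloor$. Define: - $\hat\mu_j=\frac1{|G_j|}\sum_{i\in G_j}X_i$; - $\hat T_j=\frac1{|G_j|}\sum_{i\in G_j}\|X_i-\hat\mu_j\|^2$; - $\hat T$ a median of the real numbers $\hat T_1,\ldots,\hat T_k$, i.e. any minimizer over $y\in\mathbb R$ of $\sum_j|y-\hat T_j|$ (arbitrary representative if $k$ is even). *)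

theory Defs
  imports "HOL-Probability.Probability"
begin

text \<open>Kullback-Leibler type function psi(a;p) for Bernoulli distributions.\<close>
definition psi :: "real \<Rightarrow> real \<Rightarrow> real" where
  "psi a p = (1 - a) * ln ((1 - a) / (1 - p)) + a * ln (a / p)"

definition n_blocks :: "real \<Rightarrow> nat" where
  "n_blocks \<delta> = nat \<lfloor>ln (1 / \<delta>) / psi (7/18) (1/10)\<rfloor> + 1"

definition grp_mean :: "(nat \<Rightarrow> 'a \<Rightarrow> 'h::real_normed_vector) \<Rightarrow> nat set \<Rightarrow> 'a \<Rightarrow> 'h" where
  "grp_mean Xs G \<omega> = (1 / real (card G)) *\<^sub>R (\<Sum>i\<in>G. Xs i \<omega>)"

definition grp_T :: "(nat \<Rightarrow> 'a \<Rightarrow> 'h::real_normed_vector) \<Rightarrow> nat set \<Rightarrow> 'a \<Rightarrow> real" where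
  "grp_T Xs G \<omega> = (1 / real (card G)) * (\<Sum>i\<in>G. (norm (Xs i \<omega> - grp_mean Xs G \<omega>))\<^sup>2)"

end

theory Submission
  imports Defs
begin

text \<open>Write tr for the trace of the covariance and m for the block size. Each block variance equals
  tr plus the average of the centred squared norms (norm (X i - mu))^2 - tr, minus the squared
  distance of the block mean from mu. Chebyshev's inequality for these two random terms (the first
  has variance governed by the fourth moment, the second has mean tr / m) shows that a block falls
  below tr / 2 with probability at most 1/8 once the sample size condition holds. The blocks are
  independent, and if the median of the block variances lies below tr / 2 then so do at least half
  of the k blocks; a union bound over these sets of blocks bounds the failure probability by
  2^k 8^(-k/2) = 2^(-k/2), which is at most delta by the choice of k.\<close>

section \<open>Numerical bounds\<close>

lemma psi_bounds:
  shows "1/4 \<le> psi (7/18) (1/10)" and "psi (7/18) (1/10) \<le> ln (7/5)"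
    and "2 * psi (7/18) (1/10) \<le> ln 2"
proof -
  let ?R = "(55/81::real)^11 * (35/9)^7"
  have "psi (7/18) (1/10) = (11/18) * ln (55/81) + (7/18) * ln (35/9)"
    unfolding psi_def by (simp add: field_simps)
  moreover have "ln ?R = 11 * ln (55/81) + 7 * ln (35/9)"
    by (simp add: ln_mult ln_realpow)
  ultimately have psi_eq: "18 * psi (7/18) (1/10) = ln ?R" by simp
  have "18 * ln (4/3::real) = ln ((4/3)^18)" by (simp add: ln_realpow)
  moreover have "ln ((4/3::real)^18) \<le> ln ?R" by (subst ln_le_cancel_iff) (simp_all add: power_divide)
  moreover have "1/4 \<le> ln (4/3::real)"
    using ln_le_minus_one[of "3/4::real"] by (simp add: ln_div)
  ultimately show "1/4 \<le> psi (7/18) (1/10)" using psi_eq by linarith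
  have "18 * ln (7/5::real) = ln ((7/5)^18)" by (simp add: ln_realpow)
  moreover have "ln ?R \<le> ln ((7/5::real)^18)" by (subst ln_le_cancel_iff) (simp_all add: power_divide)
  ultimately show "psi (7/18) (1/10) \<le> ln (7/5)" using psi_eq by linarith
  have "9 * ln (2::real) = ln (2^9)" by (simp only: ln_realpow[of 2 9])
  moreover have "ln ?R \<le> ln ((2::real)^9)" by (subst ln_le_cancel_iff) (simp_all add: power_divide)
  ultimately show "2 * psi (7/18) (1/10) \<le> ln 2" using psi_eq by linarith
qed

lemma n_blocks_psi_bounds:
  assumes "0 < \<delta>" "\<delta> < 1"
  shows "ln (1/\<delta>) < real (n_blocks \<delta>) * psi (7/18) (1/10)"
    and "real (n_blocks \<delta>) * psi (7/18) (1/10) \<le> ln (1.4/\<delta>)"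
proof -
  define \<psi> where "\<psi> = psi (7/18) (1/10)"
  have \<psi>: "1/4 \<le> \<psi>" "\<psi> \<le> ln (7/5)" using psi_bounds unfolding \<psi>_def by auto
  have lnd: "0 \<le> ln (1/\<delta>)" using assms by simp
  have k_eq: "real (n_blocks \<delta>) = real_of_int \<lfloor>ln (1/\<delta>) / \<psi>\<rfloor> + 1"
    unfolding n_blocks_def \<psi>_def[symmetric] using lnd \<psi> by (simp add: of_nat_nat)
  have "ln (1/\<delta>) / \<psi> < real (n_blocks \<delta>)" unfolding k_eq by linarith
  then show "ln (1/\<delta>) < real (n_blocks \<delta>) * psi (7/18) (1/10)"
    using \<psi> by (simp add: \<psi>_def field_simps)
  have "real (n_blocks \<delta>) \<le> ln (1/\<delta>) / \<psi> + 1" unfolding k_eq by linarith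
  then have "real (n_blocks \<delta>) * \<psi> \<le> ln (1/\<delta>) + \<psi>" using \<psi> by (simp add: field_simps)
  also have "\<dots> \<le> ln (7/5) + ln (1/\<delta>)" using \<psi> by simp
  also have "\<dots> = ln (1.4/\<delta>)" using assms by (simp add: ln_div ln_mult)
  finally show "real (n_blocks \<delta>) * psi (7/18) (1/10) \<le> ln (1.4/\<delta>)" unfolding \<psi>_def .
qed

lemma of_nat_div_ge: "0 < k \<Longrightarrow> real n / real k - 1 \<le> real (n div k)"
proof -
  assume k: "0 < k"
  have "real n = real k * real (n div k) + real (n mod k)"
    by (metis of_nat_add of_nat_mult div_mult_mod_eq mult.commute)
  moreover have "real (n mod k) < real k" using k by simp
  ultimately have "real n < real k * (real (n div k) + 1)" by (simp add: algebra_simps)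
  then show ?thesis using k by (simp add: field_simps)
qed

lemma sample_size_condition_bound:
  fixes \<kappa> r :: real
  assumes "0 \<le> \<kappa>" "0 < r" and cond: "15.2 * sqrt \<kappa> \<le> (1/2 - 178 / r) * sqrt r"
  shows "356 \<le> r" and "231 * \<kappa> \<le> r / 4"
proof -
  define a where "a = 1/2 - 178 / r"
  have "0 \<le> 15.2 * sqrt \<kappa>" using assms(1) by simp
  then have "0 \<le> a * sqrt r" using cond unfolding a_def by linarith
  then have a0: "0 \<le> a" using assms(2) by (simp add: zero_le_mult_iff)
  then show "356 \<le> r" using assms(2) unfolding a_def by (simp add: field_simps)
  have "(15.2 * sqrt \<kappa>)\<^sup>2 \<le> (a * sqrt r)\<^sup>2"
    using cond assms(1) unfolding a_def[symmetric] by (intro power_mono) auto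
  then have "231.04 * \<kappa> \<le> a\<^sup>2 * r" using assms by (simp add: power_mult_distrib power_divide)
  moreover have "a\<^sup>2 \<le> (1/2)\<^sup>2" using a0 assms(2) unfolding a_def by (intro power_mono) auto
  then have "a\<^sup>2 * r \<le> r / 4" using assms(2) by (simp add: power_divide mult_right_mono)
  ultimately show "231 * \<kappa> \<le> r / 4" using assms(1) by (simp add: power2_eq_square)
qed

lemma group_size_bound:
  fixes n :: nat and \<delta> \<kappa> :: real
  assumes \<delta>: "0 < \<delta>" "\<delta> < 1" and \<kappa>: "0 \<le> \<kappa>"
    and k_le: "real (n_blocks \<delta>) \<le> real n / 2"
    and cond: "15.2 * sqrt \<kappa> \<le> (1/2 - 178 * ln (1.4/\<delta>) / real n) * sqrt (real n / ln (1.4/\<delta>))"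
  shows "\<kappa> / ((3/10)\<^sup>2 * real (n div n_blocks \<delta>)) + 1 / ((1/2 - 3/10) * real (n div n_blocks \<delta>)) \<le> 1/8"
proof -
  define k where "k = n_blocks \<delta>"
  define L where "L = ln (1.4/\<delta>)"
  define r where "r = real n / L"
  define m where "m = real (n div k)"
  have k1: "1 \<le> k" unfolding k_def n_blocks_def by simp
  have "real k * (1/4) \<le> L"
    using n_blocks_psi_bounds(2)[OF \<delta>] psi_bounds(1) mult_left_mono[of "1/4" _ "real k"]
    unfolding k_def L_def by fastforce
  moreover have "0 < real n" using k_le k1 unfolding k_def by linarith
  ultimately have "r / 4 \<le> real n / real k" "0 < r"
    using k1 unfolding r_def by (auto simp: field_simps)
  moreover have "real n / real k - 1 \<le> m" unfolding m_def using k1 by (intro of_nat_div_ge) simp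
  ultimately have m_ge: "r / 4 - 1 \<le> m" by linarith
  have "1/2 - 178 * L / real n = 1/2 - 178 / r" unfolding r_def using \<open>0 < real n\<close> by simp
  then have "356 \<le> r" "231 * \<kappa> \<le> r / 4"
    using sample_size_condition_bound[OF \<kappa> \<open>0 < r\<close>] cond unfolding L_def r_def by auto
  with m_ge \<kappa> have key: "\<kappa> / (9/100) + 5 \<le> m / 8" and m_pos: "0 < m"
    by (auto simp: field_simps)
  have "\<kappa> / ((3/10)\<^sup>2 * m) + 1 / ((1/2 - 3/10) * m) = (\<kappa> / (9/100) + 5) / m"
    by (simp add: power2_eq_square add_divide_distrib)
  also have "\<dots> \<le> (m / 8) / m" using key m_pos by (intro divide_right_mono) auto
  also have "\<dots> = 1/8" using m_pos by simp
  finally show ?thesis unfolding m_def k_def .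
qed

lemma two_pow_mult_power_le:
  fixes k t :: nat and q \<delta> \<psi> :: real
  assumes q: "0 \<le> q" "q \<le> 1/8" and kt: "k \<le> 2 * t" and \<delta>: "0 < \<delta>"
    and k_\<psi>: "ln (1/\<delta>) < real k * \<psi>" and \<psi>: "2 * \<psi> \<le> ln 2"
  shows "2^k * q^t \<le> \<delta>"
proof (rule power2_le_imp_le)
  have "(2^k * q^t)\<^sup>2 = ((2::real)^2)^k * q^(2*t)"
    by (simp only: power_mult_distrib power_mult[symmetric] mult.commute)
  also have "\<dots> \<le> (2^2)^k * q^k" using q kt by (intro mult_left_mono power_decreasing) auto
  also have "\<dots> = (4*q)^k" by (simp add: power_mult_distrib)
  also have "\<dots> \<le> (1/2)^k" using q by (intro power_mono) auto
  also have "\<dots> < \<delta>\<^sup>2"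
  proof -
    have "ln ((1/2::real)^k) = - (real k * ln 2)" by (simp add: ln_realpow ln_div)
    also have "\<dots> \<le> - (real k * (2 * \<psi>))" using \<psi> by (intro le_imp_neg_le mult_left_mono) auto
    also have "\<dots> < - 2 * ln (1/\<delta>)" using k_\<psi> by simp
    also have "\<dots> = ln (\<delta>\<^sup>2)" using \<delta> by (simp add: ln_realpow ln_div)
    finally show ?thesis using \<delta> by simp
  qed
  finally show "(2^k * q^t)\<^sup>2 \<le> \<delta>\<^sup>2" by simp
qed (use \<delta> in simp)

lemma choose_mult_power_le:
  fixes k t :: nat and q \<delta> \<psi> :: real
  assumes q: "0 \<le> q" "q \<le> 1/8" and "k \<le> 2 * t" "0 < \<delta>"
    and "ln (1/\<delta>) < real k * \<psi>" "2 * \<psi> \<le> ln 2"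
  shows "real (k choose t) * q^t \<le> \<delta>"
proof -
  have "real (k choose t) * q^t \<le> 2^k * q^t"
    using binomial_le_pow2[of k t] q by (intro mult_right_mono) (simp_all flip: of_nat_le_iff)
  also have "\<dots> \<le> \<delta>" using assms by (rule two_pow_mult_power_le)
  finally show ?thesis .
qed

section \<open>Medians and empirical variances\<close>

lemma median_half_below:
  fixes t :: "nat \<Rightarrow> real"
  assumes min: "\<And>z. (\<Sum>j<k. \<bar>y - t j\<bar>) \<le> (\<Sum>j<k. \<bar>z - t j\<bar>)"
  shows "k \<le> 2 * card {j. j < k \<and> t j \<le> y}"
proof (rule ccontr)
  define A where "A = {j. j < k \<and> t j \<le> y}"
  define B where "B = {j. j < k \<and> y < t j}"
  assume "\<not> k \<le> 2 * card {j. j < k \<and> t j \<le> y}"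
  moreover have AB: "{..<k} = A \<union> B" "A \<inter> B = {}" "finite A" "finite B"
    unfolding A_def B_def by auto
  moreover have "card A + card B = k"
    using card_Un_disjoint[OF AB(3,4,2)] AB(1) by (metis card_lessThan)
  ultimately have less: "card A < card B" unfolding A_def by simp
  then have "B \<noteq> {}" by auto
  text \<open>Moving y up to the nearest value above it decreases the sum by (card B - card A) times the step.\<close>
  define \<epsilon> where "\<epsilon> = Min ((\<lambda>j. t j - y) ` B)"
  have \<epsilon>_pos: "0 < \<epsilon>"
    unfolding \<epsilon>_def using AB \<open>B \<noteq> {}\<close> by (subst Min_gr_iff) (auto simp: B_def)
  have \<epsilon>_le: "\<epsilon> \<le> t j - y" if "j \<in> B" for j unfolding \<epsilon>_def using AB that by (intro Min_le) auto
  have "(\<Sum>j\<in>A. \<bar>y + \<epsilon> - t j\<bar>) = (\<Sum>j\<in>A. \<bar>y - t j\<bar> + \<epsilon>)"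
    using \<epsilon>_pos by (intro sum.cong) (auto simp: A_def)
  moreover have "(\<Sum>j\<in>B. \<bar>y + \<epsilon> - t j\<bar>) = (\<Sum>j\<in>B. \<bar>y - t j\<bar> - \<epsilon>)"
    using \<epsilon>_le by (intro sum.cong) (force simp: B_def)+
  ultimately have "(\<Sum>j<k. \<bar>y + \<epsilon> - t j\<bar>) = (\<Sum>j\<in>A. \<bar>y - t j\<bar> + \<epsilon>) + (\<Sum>j\<in>B. \<bar>y - t j\<bar> - \<epsilon>)"
    unfolding AB(1) using AB(2-4) by (simp add: sum.union_disjoint)
  also have "\<dots> = (\<Sum>j<k. \<bar>y - t j\<bar>) + \<epsilon> * (real (card A) - real (card B))"
    unfolding AB(1) using AB(2-4)
    by (simp add: sum.union_disjoint sum.distrib sum_subtractf algebra_simps)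
  also have "\<dots> < (\<Sum>j<k. \<bar>y - t j\<bar>)" using \<epsilon>_pos less by (simp add: mult_pos_neg)
  finally show False using min[of "y + \<epsilon>"] by linarith
qed

lemma sum_norm_sq_dev_mean:
  fixes x :: "'i \<Rightarrow> 'h::real_inner"
  assumes "finite G" "G \<noteq> {}"
  shows "(\<Sum>i\<in>G. (norm (x i - (1 / real (card G)) *\<^sub>R (\<Sum>l\<in>G. x l)))\<^sup>2)
    = (\<Sum>i\<in>G. (norm (x i - \<mu>))\<^sup>2) - (norm (\<Sum>i\<in>G. x i - \<mu>))\<^sup>2 / real (card G)"
proof -
  define m where "m = real (card G)"
  define S where "S = (\<Sum>i\<in>G. x i - \<mu>)"
  have m: "0 < m" unfolding m_def using assms by (simp add: card_gt_0_iff)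
  have "(1 / m) *\<^sub>R (\<Sum>l\<in>G. x l) = \<mu> + (1 / m) *\<^sub>R S"
    using m unfolding S_def m_def by (simp add: sum_subtractf scaleR_diff_right sum_constant_scaleR)
  then have dev: "x i - (1 / m) *\<^sub>R (\<Sum>l\<in>G. x l) = (x i - \<mu>) - (1 / m) *\<^sub>R S" for i
    by simp
  have norm_diff_sq: "(norm (a - b))\<^sup>2 = (norm a)\<^sup>2 - 2 * (a \<bullet> b) + (norm b)\<^sup>2" for a b :: 'h
    by (simp add: power2_norm_eq_inner inner_diff_left inner_diff_right inner_commute)
  have "(\<Sum>i\<in>G. (norm (x i - (1 / m) *\<^sub>R (\<Sum>l\<in>G. x l)))\<^sup>2)
      = (\<Sum>i\<in>G. (norm (x i - \<mu>))\<^sup>2 - 2 * ((x i - \<mu>) \<bullet> ((1 / m) *\<^sub>R S)) + (norm ((1 / m) *\<^sub>R S))\<^sup>2)"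
    unfolding dev norm_diff_sq ..
  also have "\<dots> = (\<Sum>i\<in>G. (norm (x i - \<mu>))\<^sup>2) - (\<Sum>i\<in>G. 2 * ((x i - \<mu>) \<bullet> ((1 / m) *\<^sub>R S)))
      + m * (norm ((1 / m) *\<^sub>R S))\<^sup>2"
    unfolding m_def by (simp add: sum.distrib sum_subtractf)
  also have "(\<Sum>i\<in>G. 2 * ((x i - \<mu>) \<bullet> ((1 / m) *\<^sub>R S))) = 2 * (S \<bullet> ((1 / m) *\<^sub>R S))"
    unfolding S_def by (simp add: inner_sum_left sum_distrib_left)
  also have "(\<Sum>i\<in>G. (norm (x i - \<mu>))\<^sup>2) - 2 * (S \<bullet> ((1 / m) *\<^sub>R S)) + m * (norm ((1 / m) *\<^sub>R S))\<^sup>2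
      = (\<Sum>i\<in>G. (norm (x i - \<mu>))\<^sup>2) - (norm S)\<^sup>2 / m"
    using m by (simp add: dot_square_norm power2_eq_square field_simps)
  finally show ?thesis unfolding m_def S_def .
qed

lemma grp_T_decomposition:
  fixes Xs :: "nat \<Rightarrow> 'a \<Rightarrow> 'h::real_inner"
  assumes "finite G" "G \<noteq> {}"
  shows "grp_T Xs G \<omega> = tr + (\<Sum>i\<in>G. (norm (Xs i \<omega> - \<mu>))\<^sup>2 - tr) / real (card G)
          - (norm (\<Sum>i\<in>G. Xs i \<omega> - \<mu>))\<^sup>2 / (real (card G))\<^sup>2"
proof -
  have "0 < real (card G)" using assms by (simp add: card_gt_0_iff)
  then show ?thesis
    unfolding grp_T_def grp_mean_def sum_norm_sq_dev_mean[OF assms, of "\<lambda>i. Xs i \<omega>" \<mu>]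
    by (simp add: sum_subtractf field_simps power2_eq_square)
qed

section \<open>Chebyshev bound for a single block\<close>

lemma one_le_deviation_split:
  fixes tr c s R :: real
  assumes "0 < tr" "0 < c" "c < 1/2" "0 \<le> R" and less: "tr + s - R < tr / 2"
  shows "1 \<le> s\<^sup>2 / (c * tr)\<^sup>2 + R / ((1/2 - c) * tr)"
proof -
  have nonneg: "0 \<le> s\<^sup>2 / (c * tr)\<^sup>2" "0 \<le> R / ((1/2 - c) * tr)" using assms by auto
  show ?thesis
  proof (cases "s < - (c * tr)")
    case True
    then have "(c * tr)\<^sup>2 \<le> (- s)\<^sup>2" using assms by (intro power_mono) auto
    then have "(c * tr)\<^sup>2 \<le> s\<^sup>2" by simp
    then have "1 \<le> s\<^sup>2 / (c * tr)\<^sup>2" using assms by simp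
    then show ?thesis using nonneg by linarith
  next
    case False
    then have "(1/2 - c) * tr \<le> R" using less by (simp add: algebra_simps)
    then have "1 \<le> R / ((1/2 - c) * tr)" using assms by simp
    then show ?thesis using nonneg by linarith
  qed
qed

lemma integrable_integral_double_sum:
  fixes f :: "'i \<Rightarrow> 'i \<Rightarrow> 'a \<Rightarrow> real"
  assumes "finite G"
    and int: "\<And>i l. i \<in> G \<Longrightarrow> l \<in> G \<Longrightarrow> integrable M (f i l)"
    and eq: "\<And>i l. i \<in> G \<Longrightarrow> l \<in> G \<Longrightarrow> integral\<^sup>L M (f i l) = (if i = l then v else 0)"
  shows "integrable M (\<lambda>\<omega>. \<Sum>i\<in>G. \<Sum>l\<in>G. f i l \<omega>)"
    and "(\<integral>\<omega>. (\<Sum>i\<in>G. \<Sum>l\<in>G. f i l \<omega>) \<partial>M) = real (card G) * v"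
  using assms by (simp_all add: integral_sum)

text \<open>Chebyshev's inequality, applied separately to the average of the centred squared norms and to
  the squared distance of the block mean from the centre.\<close>
lemma (in prob_space) prob_grp_T_lt_half_le_expectation:
  fixes Xs :: "nat \<Rightarrow> 'a \<Rightarrow> 'h::{real_inner, second_countable_topology}"
  assumes fin: "finite G" and ne: "G \<noteq> {}"
    and meas: "\<And>i. i \<in> G \<Longrightarrow> Xs i \<in> borel_measurable M"
    and tr: "0 < tr" and c: "0 < c" "c < 1/2"
    and int: "integrable M (\<lambda>\<omega>. ((\<Sum>i\<in>G. (norm (Xs i \<omega> - \<mu>))\<^sup>2 - tr) / real (card G))\<^sup>2 / (c * tr)\<^sup>2
      + ((norm (\<Sum>i\<in>G. Xs i \<omega> - \<mu>))\<^sup>2 / (real (card G))\<^sup>2) / ((1/2 - c) * tr))"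
  shows "prob {\<omega> \<in> space M. grp_T Xs G \<omega> < tr / 2}
    \<le> (\<integral>\<omega>. ((\<Sum>i\<in>G. (norm (Xs i \<omega> - \<mu>))\<^sup>2 - tr) / real (card G))\<^sup>2 / (c * tr)\<^sup>2
      + ((norm (\<Sum>i\<in>G. Xs i \<omega> - \<mu>))\<^sup>2 / (real (card G))\<^sup>2) / ((1/2 - c) * tr) \<partial>M)"
    (is "prob ?A \<le> integral\<^sup>L M ?g")
proof -
  have "(\<lambda>\<omega>. grp_T Xs G \<omega>) \<in> borel_measurable M"
    unfolding grp_T_def grp_mean_def using meas by measurable
  then have A: "?A \<in> events" by measurable
  have "indicator ?A \<omega> \<le> ?g \<omega>" for \<omega>
  proof (cases "\<omega> \<in> ?A")
    case True
    then have "1 \<le> ?g \<omega>"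
      using grp_T_decomposition[OF fin ne, of Xs \<omega> tr \<mu>]
      by (intro one_le_deviation_split[OF tr c]) auto
    then show ?thesis using True by simp
  qed (use tr c in simp)
  then have "integral\<^sup>L M (indicator ?A) \<le> integral\<^sup>L M ?g"
    using A int by (intro integral_mono) (auto intro!: integrable_real_indicator simp: emeasure_eq_measure)
  then show ?thesis using A by simp
qed

lemma (in prob_space) prob_grp_T_lt_half_le:
  fixes Xs :: "nat \<Rightarrow> 'a \<Rightarrow> 'h::{real_inner, second_countable_topology}"
  assumes fin: "finite G" and ne: "G \<noteq> {}"
    and meas: "\<And>i. i \<in> G \<Longrightarrow> Xs i \<in> borel_measurable M"
    and sq_int: "\<And>i l. i \<in> G \<Longrightarrow> l \<in> G \<Longrightarrow>
      integrable M (\<lambda>\<omega>. ((norm (Xs i \<omega> - \<mu>))\<^sup>2 - tr) * ((norm (Xs l \<omega> - \<mu>))\<^sup>2 - tr))"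
    and sq_cov: "\<And>i l. i \<in> G \<Longrightarrow> l \<in> G \<Longrightarrow>
      (\<integral>\<omega>. ((norm (Xs i \<omega> - \<mu>))\<^sup>2 - tr) * ((norm (Xs l \<omega> - \<mu>))\<^sup>2 - tr) \<partial>M) = (if i = l then v else 0)"
    and inner_int: "\<And>i l. i \<in> G \<Longrightarrow> l \<in> G \<Longrightarrow> integrable M (\<lambda>\<omega>. (Xs i \<omega> - \<mu>) \<bullet> (Xs l \<omega> - \<mu>))"
    and inner_cov: "\<And>i l. i \<in> G \<Longrightarrow> l \<in> G \<Longrightarrow>
      (\<integral>\<omega>. (Xs i \<omega> - \<mu>) \<bullet> (Xs l \<omega> - \<mu>) \<partial>M) = (if i = l then tr else 0)"
    and tr: "0 < tr" and c: "0 < c" "c < 1/2"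
  shows "prob {\<omega> \<in> space M. grp_T Xs G \<omega> < tr / 2}
    \<le> (v / tr\<^sup>2) / (c\<^sup>2 * real (card G)) + 1 / ((1/2 - c) * real (card G))"
proof -
  define m where "m = real (card G)"
  have m: "0 < m" unfolding m_def using fin ne by (simp add: card_gt_0_iff)
  define Z where "Z \<omega> = (\<Sum>i\<in>G. (norm (Xs i \<omega> - \<mu>))\<^sup>2 - tr)" for \<omega>
  define Y where "Y \<omega> = (\<Sum>i\<in>G. Xs i \<omega> - \<mu>)" for \<omega>
  have Z_sq: "(Z \<omega>)\<^sup>2 = (\<Sum>i\<in>G. \<Sum>l\<in>G. ((norm (Xs i \<omega> - \<mu>))\<^sup>2 - tr) * ((norm (Xs l \<omega> - \<mu>))\<^sup>2 - tr))" for \<omega>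
    unfolding Z_def by (simp add: power2_eq_square sum_product)
  have Y_sq: "(norm (Y \<omega>))\<^sup>2 = (\<Sum>i\<in>G. \<Sum>l\<in>G. (Xs i \<omega> - \<mu>) \<bullet> (Xs l \<omega> - \<mu>))" for \<omega>
    unfolding Y_def by (simp add: power2_norm_eq_inner inner_sum_left inner_sum_right inner_commute)
  have int_Z: "integrable M (\<lambda>\<omega>. (Z \<omega>)\<^sup>2)" and E_Z: "(\<integral>\<omega>. (Z \<omega>)\<^sup>2 \<partial>M) = m * v"
    unfolding Z_sq m_def using integrable_integral_double_sum[OF fin sq_int sq_cov] by auto
  have int_Y: "integrable M (\<lambda>\<omega>. (norm (Y \<omega>))\<^sup>2)" and E_Y: "(\<integral>\<omega>. (norm (Y \<omega>))\<^sup>2 \<partial>M) = m * tr"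
    unfolding Y_sq m_def using integrable_integral_double_sum[OF fin inner_int inner_cov] by auto
  define g where "g \<omega> = (Z \<omega> / m)\<^sup>2 / (c * tr)\<^sup>2 + ((norm (Y \<omega>))\<^sup>2 / m\<^sup>2) / ((1/2 - c) * tr)" for \<omega>
  have g_eq: "g = (\<lambda>\<omega>. (Z \<omega>)\<^sup>2 / (m * c * tr)\<^sup>2 + (norm (Y \<omega>))\<^sup>2 / (m\<^sup>2 * (1/2 - c) * tr))"
    unfolding g_def by (auto simp: power_divide power_mult_distrib)
  have "integrable M g" unfolding g_eq using int_Z int_Y by auto
  then have "prob {\<omega> \<in> space M. grp_T Xs G \<omega> < tr / 2} \<le> integral\<^sup>L M g"
    unfolding g_def Z_def Y_def m_def using prob_grp_T_lt_half_le_expectation[OF fin ne meas tr c] by simp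
  also have "\<dots> = m * v / (m * c * tr)\<^sup>2 + m * tr / (m\<^sup>2 * (1/2 - c) * tr)"
    unfolding g_eq using int_Z int_Y E_Z E_Y by simp
  also have "\<dots> = (v / tr\<^sup>2) / (c\<^sup>2 * m) + 1 / ((1/2 - c) * m)"
    using m tr c by (simp add: power2_eq_square field_simps)
  finally show ?thesis unfolding m_def .
qed

section \<open>Independent and identically distributed samples\<close>

lemma integrable_integral_eq_if_distr_eq:
  fixes f :: "'b::topological_space \<Rightarrow> 'c::{banach, second_countable_topology}"
  assumes Y: "Y \<in> borel_measurable M" and X: "X \<in> borel_measurable M"
    and distr_eq: "distr M borel Y = distr M borel X"
    and f: "f \<in> borel_measurable borel" and int: "integrable M (\<lambda>\<omega>. f (X \<omega>))"
  shows "integrable M (\<lambda>\<omega>. f (Y \<omega>))" and "(\<integral>\<omega>. f (Y \<omega>) \<partial>M) = (\<integral>\<omega>. f (X \<omega>) \<partial>M)"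
proof -
  show "integrable M (\<lambda>\<omega>. f (Y \<omega>))"
    using int integrable_distr_eq[OF Y f] integrable_distr_eq[OF X f] distr_eq by simp
  show "(\<integral>\<omega>. f (Y \<omega>) \<partial>M) = (\<integral>\<omega>. f (X \<omega>) \<partial>M)"
    using integral_distr[OF Y f] integral_distr[OF X f] distr_eq by simp
qed

lemma (in finite_measure) integrable_power2_of_power4:
  fixes f :: "'a \<Rightarrow> real"
  assumes "f \<in> borel_measurable M" "integrable M (\<lambda>\<omega>. f \<omega> ^ 4)"
  shows "integrable M (\<lambda>\<omega>. (f \<omega>)\<^sup>2)"
proof (rule Bochner_Integration.integrable_bound)
  show "integrable M (\<lambda>\<omega>. 1 + f \<omega> ^ 4)" using assms by simp
  have "a\<^sup>2 \<le> 1 + a ^ 4" for a :: real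
    using zero_le_power2[of "a\<^sup>2 - 1/2"] by (simp add: power2_eq_square power4_eq_xxxx algebra_simps)
  then show "AE \<omega> in M. norm ((f \<omega>)\<^sup>2) \<le> norm (1 + f \<omega> ^ 4)"
    by (intro AE_I2) (simp add: add_increasing)
qed (use assms in measurable)

lemma integrable_inner_of_norm_power2:
  fixes U V :: "'a \<Rightarrow> 'h::{real_inner, second_countable_topology}"
  assumes "U \<in> borel_measurable M" "V \<in> borel_measurable M"
    and "integrable M (\<lambda>\<omega>. (norm (U \<omega>))\<^sup>2)" "integrable M (\<lambda>\<omega>. (norm (V \<omega>))\<^sup>2)"
  shows "integrable M (\<lambda>\<omega>. U \<omega> \<bullet> V \<omega>)"
proof (rule Bochner_Integration.integrable_bound)
  show "integrable M (\<lambda>\<omega>. (norm (U \<omega>))\<^sup>2 + (norm (V \<omega>))\<^sup>2)" using assms by auto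
  have "\<bar>a \<bullet> b\<bar> \<le> (norm a)\<^sup>2 + (norm b)\<^sup>2" for a b :: 'h
  proof -
    have "\<bar>a \<bullet> b\<bar> \<le> norm a * norm b" by (rule Cauchy_Schwarz_ineq2)
    also have "\<dots> \<le> (norm a)\<^sup>2 + (norm b)\<^sup>2"
    proof -
      have "2 * (norm a * norm b) \<le> (norm a)\<^sup>2 + (norm b)\<^sup>2"
        using zero_le_power2[of "norm a - norm b"] by (simp add: power2_eq_square algebra_simps)
      moreover have "0 \<le> norm a * norm b" by simp
      ultimately show ?thesis by linarith
    qed
    finally show ?thesis .
  qed
  then show "AE \<omega> in M. norm (U \<omega> \<bullet> V \<omega>) \<le> norm ((norm (U \<omega>))\<^sup>2 + (norm (V \<omega>))\<^sup>2)"
    by (intro AE_I2) simp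
qed (use assms in measurable)

lemma (in prob_space) indep_vars_indep_var:
  assumes ind: "indep_vars (\<lambda>_. N) X I" and "i \<in> I" "j \<in> I" "i \<noteq> j"
  shows "indep_var N (X i) N (X j)"
proof -
  have "indep_var (PiM {i} (\<lambda>_. N)) (\<lambda>\<omega>. restrict (\<lambda>i. X i \<omega>) {i})
      (PiM {j} (\<lambda>_. N)) (\<lambda>\<omega>. restrict (\<lambda>i. X i \<omega>) {j})"
    using assms by (intro indep_var_restrict[OF ind]) auto
  then have "indep_var N ((\<lambda>x. x i) \<circ> (\<lambda>\<omega>. restrict (\<lambda>i. X i \<omega>) {i}))
      N ((\<lambda>x. x j) \<circ> (\<lambda>\<omega>. restrict (\<lambda>i. X i \<omega>) {j}))"
    by (rule indep_var_compose) (auto intro!: measurable_component_singleton)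
  then show ?thesis by (simp add: comp_def)
qed

lemma (in prob_space) indep_var_integral_inner_centered:
  fixes U V :: "'a \<Rightarrow> 'h::{real_inner, second_countable_topology}"
  assumes ind: "indep_var borel U borel V"
    and int: "integrable M (\<lambda>\<omega>. (U \<omega> - c) \<bullet> (V \<omega> - c))"
    and centered: "\<And>a. (\<integral>\<omega>. a \<bullet> (V \<omega> - c) \<partial>M) = 0"
  shows "(\<integral>\<omega>. (U \<omega> - c) \<bullet> (V \<omega> - c) \<partial>M) = 0"
proof -
  have rv: "random_variable borel U" "random_variable borel V"
    using ind indep_var_distribution_eq by blast+
  interpret PU: prob_space "distr M borel U" by (rule prob_space_distr) (rule rv(1))
  interpret PV: prob_space "distr M borel V" by (rule prob_space_distr) (rule rv(2))
  interpret PUV: pair_sigma_finite "distr M borel U" "distr M borel V" ..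
  define h where "h = (\<lambda>(a::'h, b). (a - c) \<bullet> (b - c))"
  have joint: "distr M borel U \<Otimes>\<^sub>M distr M borel V = distr M (borel \<Otimes>\<^sub>M borel) (\<lambda>x. (U x, V x))"
    using ind indep_var_distribution_eq by blast
  have h: "h \<in> borel_measurable (borel \<Otimes>\<^sub>M borel)" unfolding h_def by measurable
  have UV: "(\<lambda>x. (U x, V x)) \<in> measurable M (borel \<Otimes>\<^sub>M borel)" using rv by measurable
  have "(\<integral>\<omega>. (U \<omega> - c) \<bullet> (V \<omega> - c) \<partial>M) = integral\<^sup>L (distr M borel U \<Otimes>\<^sub>M distr M borel V) h"
    unfolding joint by (subst integral_distr[OF UV h]) (simp add: h_def)
  also have "\<dots> = (\<integral>a. (\<integral>b. h (a, b) \<partial>distr M borel V) \<partial>distr M borel U)"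
  proof (rule PUV.integral_fst'[symmetric])
    show "integrable (distr M borel U \<Otimes>\<^sub>M distr M borel V) h"
      unfolding joint using int UV h by (subst integrable_distr_eq) (auto simp: h_def)
  qed
  also have "\<dots> = 0"
    using centered rv(2) by (simp add: h_def integral_distr)
  finally show ?thesis .
qed

lemma (in prob_space) indep_vars_grp_T:
  fixes Xs :: "nat \<Rightarrow> 'a \<Rightarrow> 'h::{real_normed_vector, second_countable_topology}"
  assumes ind: "indep_vars (\<lambda>_. borel) Xs I"
    and sub: "\<And>j. j \<in> J \<Longrightarrow> G j \<subseteq> I" and disj: "disjoint_family_on G J"
  shows "indep_vars (\<lambda>_. borel) (\<lambda>j. grp_T Xs (G j)) J"
proof -
  text \<open>T j is the block statistic as a function of the sample values in block j, obtained by
    feeding constant random variables over unit to grp_T.\<close>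
  define T where "T j x = grp_T (\<lambda>i (_::unit). x i) (G j) ()" for j and x :: "nat \<Rightarrow> 'h"
  have "indep_vars (\<lambda>j. PiM (G j) (\<lambda>_. borel)) (\<lambda>j \<omega>. restrict (\<lambda>i. Xs i \<omega>) (G j)) J"
    using sub disj by (intro indep_vars_restrict[OF ind]) auto
  then have "indep_vars (\<lambda>_. borel) (\<lambda>j \<omega>. T j (restrict (\<lambda>i. Xs i \<omega>) (G j))) J"
  proof (rule indep_vars_compose2)
    show "T j \<in> borel_measurable (PiM (G j) (\<lambda>_. borel))" for j
      unfolding T_def grp_T_def grp_mean_def
      by (intro borel_measurable_times borel_measurable_sum borel_measurable_const
            borel_measurable_power borel_measurable_norm borel_measurable_diff
            borel_measurable_scaleR measurable_component_singleton) auto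
  qed
  moreover have "T j (restrict (\<lambda>i. Xs i \<omega>) (G j)) = grp_T Xs (G j) \<omega>" for j \<omega>
    unfolding T_def grp_T_def grp_mean_def by simp
  ultimately show ?thesis by simp
qed

lemma (in prob_space) prob_le_choose_mult_power:
  assumes indep: "indep_events F {..<k}" and F: "\<And>j. j < k \<Longrightarrow> prob (F j) \<le> p"
    and s: "1 \<le> s" and cover: "\<And>\<omega>. \<omega> \<in> A \<Longrightarrow> s \<le> card {j. j < k \<and> \<omega> \<in> F j}"
  shows "prob A \<le> real (k choose s) * p ^ s"
proof -
  define SS where "SS = {S. S \<subseteq> {..<k} \<and> card S = s}"
  have SS: "S \<subseteq> {..<k}" "finite S" "S \<noteq> {}" "card S = s" if "S \<in> SS" for S
    using that s finite_subset[of S "{..<k}"] unfolding SS_def by auto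
  have "finite SS" unfolding SS_def by (rule finite_subset[of _ "Pow {..<k}"]) auto
  have events: "F j \<in> events" if "j < k" for j using indep that by (auto simp: indep_events_def)
  have inter_events: "(\<Inter>j\<in>S. F j) \<in> events" if "S \<in> SS" for S
    using SS[OF that] events by (intro sets.finite_INT) auto
  have "A \<subseteq> (\<Union>S\<in>SS. \<Inter>j\<in>S. F j)"
  proof
    fix \<omega> assume "\<omega> \<in> A"
    then obtain S where "S \<subseteq> {j. j < k \<and> \<omega> \<in> F j}" "card S = s"
      using cover by (meson obtain_subset_with_card_n)
    then show "\<omega> \<in> (\<Union>S\<in>SS. \<Inter>j\<in>S. F j)" unfolding SS_def by blast
  qed
  then have "prob A \<le> prob (\<Union>S\<in>SS. \<Inter>j\<in>S. F j)"
    using inter_events \<open>finite SS\<close> by (intro finite_measure_mono) auto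
  also have "\<dots> \<le> (\<Sum>S\<in>SS. prob (\<Inter>j\<in>S. F j))"
    using inter_events \<open>finite SS\<close> by (intro finite_measure_subadditive_finite) auto
  also have "\<dots> \<le> (\<Sum>S\<in>SS. p ^ s)"
  proof (rule sum_mono)
    fix S assume S: "S \<in> SS"
    have "prob (\<Inter>j\<in>S. F j) = (\<Prod>j\<in>S. prob (F j))"
      using indep SS[OF S] by (auto simp: indep_events_def)
    also have "\<dots> \<le> (\<Prod>j\<in>S. p)" using SS[OF S] F by (intro prod_mono) auto
    finally show "prob (\<Inter>j\<in>S. F j) \<le> p ^ s" using SS[OF S] by simp
  qed
  also have "\<dots> = real (k choose s) * p ^ s" unfolding SS_def using n_subsets[of "{..<k}" s] by simp
  finally show ?thesis .
qed

locale iid_sample = prob_space +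
  fixes X :: "'a \<Rightarrow> 'h::{real_inner, complete_space, second_countable_topology}"
    and Xs :: "nat \<Rightarrow> 'a \<Rightarrow> 'h" and n :: nat
  assumes X_meas: "X \<in> borel_measurable M"
    and X_int: "integrable M X"
    and X_4: "integrable M (\<lambda>\<omega>. (norm (X \<omega> - integral\<^sup>L M X)) ^ 4)"
    and Xs_meas: "\<And>i. i < n \<Longrightarrow> Xs i \<in> borel_measurable M"
    and Xs_distr: "\<And>i. i < n \<Longrightarrow> distr M borel (Xs i) = distr M borel X"
    and Xs_indep: "indep_vars (\<lambda>_. borel) Xs {0..<n}"
begin

abbreviation "mean \<equiv> integral\<^sup>L M X"

abbreviation "var_trace \<equiv> integral\<^sup>L M (\<lambda>\<omega>. (norm (X \<omega> - mean))\<^sup>2)"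

abbreviation "fourth_moment \<equiv> integral\<^sup>L M (\<lambda>\<omega>. (norm (X \<omega> - mean)) ^ 4)"

lemma integrable_norm_dev_sq: "integrable M (\<lambda>\<omega>. (norm (X \<omega> - mean))\<^sup>2)"
  using X_meas X_4 by (intro integrable_power2_of_power4) auto

lemma Xs_integrable_integral:
  fixes f :: "'h \<Rightarrow> real"
  assumes "i < n" "f \<in> borel_measurable borel" "integrable M (\<lambda>\<omega>. f (X \<omega>))"
  shows "integrable M (\<lambda>\<omega>. f (Xs i \<omega>))" and "(\<integral>\<omega>. f (Xs i \<omega>) \<partial>M) = (\<integral>\<omega>. f (X \<omega>) \<partial>M)"
  using integrable_integral_eq_if_distr_eq[OF Xs_meas[OF assms(1)] X_meas Xs_distr[OF assms(1)] assms(2,3)]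
  by auto

lemma Xs_indep_var: "i < n \<Longrightarrow> l < n \<Longrightarrow> i \<noteq> l \<Longrightarrow> indep_var borel (Xs i) borel (Xs l)"
  using Xs_indep by (rule indep_vars_indep_var) auto

lemma sq_dev_variance:
  shows "integrable M (\<lambda>\<omega>. ((norm (X \<omega> - mean))\<^sup>2 - var_trace)\<^sup>2)"
    and "(\<integral>\<omega>. ((norm (X \<omega> - mean))\<^sup>2 - var_trace)\<^sup>2 \<partial>M) = fourth_moment - var_trace\<^sup>2"
proof -
  have "((norm (x - mean))\<^sup>2 - var_trace)\<^sup>2
      = (norm (x - mean)) ^ 4 - 2 * var_trace * (norm (x - mean))\<^sup>2 + var_trace\<^sup>2" for x
    by (simp add: power2_eq_square power4_eq_xxxx algebra_simps)
  then show "integrable M (\<lambda>\<omega>. ((norm (X \<omega> - mean))\<^sup>2 - var_trace)\<^sup>2)"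
      "(\<integral>\<omega>. ((norm (X \<omega> - mean))\<^sup>2 - var_trace)\<^sup>2 \<partial>M) = fourth_moment - var_trace\<^sup>2"
    using X_4 integrable_norm_dev_sq by (simp_all add: prob_space power2_eq_square)
qed

lemma var_trace_sq_le_fourth_moment: "var_trace\<^sup>2 \<le> fourth_moment"
  using integral_nonneg_AE[of "\<lambda>\<omega>. ((norm (X \<omega> - mean))\<^sup>2 - var_trace)\<^sup>2" M] sq_dev_variance(2) by simp

lemma sq_dev_covariance:
  assumes "i < n" "l < n"
  shows "integrable M (\<lambda>\<omega>. ((norm (Xs i \<omega> - mean))\<^sup>2 - var_trace) * ((norm (Xs l \<omega> - mean))\<^sup>2 - var_trace))"
    and "(\<integral>\<omega>. ((norm (Xs i \<omega> - mean))\<^sup>2 - var_trace) * ((norm (Xs l \<omega> - mean))\<^sup>2 - var_trace) \<partial>M)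
      = (if i = l then fourth_moment - var_trace\<^sup>2 else 0)"
proof -
  define Z where "Z x = (norm (x - mean))\<^sup>2 - var_trace" for x
  have Z: "Z \<in> borel_measurable borel" unfolding Z_def by measurable
  have Z_X: "integrable M (\<lambda>\<omega>. Z (X \<omega>))" "(\<integral>\<omega>. Z (X \<omega>) \<partial>M) = 0"
    unfolding Z_def using integrable_norm_dev_sq by (simp_all add: prob_space)
  have Z_sq_X: "integrable M (\<lambda>\<omega>. Z (X \<omega>) * Z (X \<omega>))"
      "(\<integral>\<omega>. Z (X \<omega>) * Z (X \<omega>) \<partial>M) = fourth_moment - var_trace\<^sup>2"
    using sq_dev_variance unfolding Z_def power2_eq_square by simp_all
  have "integrable M (\<lambda>\<omega>. Z (Xs i \<omega>) * Z (Xs l \<omega>)) \<and>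
      (\<integral>\<omega>. Z (Xs i \<omega>) * Z (Xs l \<omega>) \<partial>M) = (if i = l then fourth_moment - var_trace\<^sup>2 else 0)"
  proof (cases "i = l")
    case True
    then show ?thesis
      using Xs_integrable_integral[OF assms(1) _ Z_sq_X(1)] Z_sq_X(2) Z by simp
  next
    case False
    have ind: "indep_var borel (Z \<circ> Xs i) borel (Z \<circ> Xs l)"
      using Xs_indep_var[OF assms(1,2) False] Z Z by (rule indep_var_compose)
    have "integrable M (\<lambda>\<omega>. Z (Xs j \<omega>))" "(\<integral>\<omega>. Z (Xs j \<omega>) \<partial>M) = 0" if "j < n" for j
      using Xs_integrable_integral[OF that Z Z_X(1)] Z_X(2) by auto
    then show ?thesis
      using indep_var_integrable[OF ind] indep_var_lebesgue_integral[OF ind] False assms(1,2)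
      by (simp add: comp_def)
  qed
  then show "integrable M (\<lambda>\<omega>. ((norm (Xs i \<omega> - mean))\<^sup>2 - var_trace) * ((norm (Xs l \<omega> - mean))\<^sup>2 - var_trace))"
    "(\<integral>\<omega>. ((norm (Xs i \<omega> - mean))\<^sup>2 - var_trace) * ((norm (Xs l \<omega> - mean))\<^sup>2 - var_trace) \<partial>M)
      = (if i = l then fourth_moment - var_trace\<^sup>2 else 0)"
    unfolding Z_def by auto
qed

lemma inner_dev_covariance:
  assumes "i < n" "l < n"
  shows "integrable M (\<lambda>\<omega>. (Xs i \<omega> - mean) \<bullet> (Xs l \<omega> - mean))"
    and "(\<integral>\<omega>. (Xs i \<omega> - mean) \<bullet> (Xs l \<omega> - mean) \<partial>M) = (if i = l then var_trace else 0)"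
proof -
  have sq: "integrable M (\<lambda>\<omega>. (norm (Xs j \<omega> - mean))\<^sup>2)"
      "(\<integral>\<omega>. (norm (Xs j \<omega> - mean))\<^sup>2 \<partial>M) = var_trace" if "j < n" for j
    using Xs_integrable_integral[OF that _ integrable_norm_dev_sq] by auto
  have centered: "(\<integral>\<omega>. a \<bullet> (Xs j \<omega> - mean) \<partial>M) = 0" if "j < n" for j a
  proof -
    have "integrable M (\<lambda>\<omega>. a \<bullet> (X \<omega> - mean))" using X_int by auto
    moreover have "(\<integral>\<omega>. a \<bullet> (X \<omega> - mean) \<partial>M) = 0"
      using X_int by (simp add: inner_diff_right prob_space)
    ultimately show ?thesis using Xs_integrable_integral[OF that, of "\<lambda>x. a \<bullet> (x - mean)"] by simp
  qed
  show int: "integrable M (\<lambda>\<omega>. (Xs i \<omega> - mean) \<bullet> (Xs l \<omega> - mean))"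
    using sq assms Xs_meas by (intro integrable_inner_of_norm_power2) auto
  show "(\<integral>\<omega>. (Xs i \<omega> - mean) \<bullet> (Xs l \<omega> - mean) \<partial>M) = (if i = l then var_trace else 0)"
  proof (cases "i = l")
    case True
    then show ?thesis using sq[OF assms(1)] by (simp add: power2_norm_eq_inner)
  next
    case False
    then show ?thesis
      using indep_var_integral_inner_centered[OF Xs_indep_var[OF assms False] int centered[OF assms(2)]]
      by simp
  qed
qed

lemma prob_block_grp_T_lt_half_le:
  assumes "G \<subseteq> {0..<n}" "G \<noteq> {}" "0 < var_trace" "0 < c" "c < 1/2"
  shows "prob {\<omega> \<in> space M. grp_T Xs G \<omega> < var_trace / 2}
    \<le> ((fourth_moment - var_trace\<^sup>2) / var_trace\<^sup>2) / (c\<^sup>2 * real (card G)) + 1 / ((1/2 - c) * real (card G))"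
proof -
  have below: "i < n" if "i \<in> G" for i using assms(1) that by auto
  have "finite G" using assms(1) finite_subset by blast
  then show ?thesis
    by (rule prob_grp_T_lt_half_le[where \<mu> = mean])
      (assumption | rule assms below Xs_meas sq_dev_covariance inner_dev_covariance)+
qed

text \<open>If the median of the block statistics is below half the trace, then so are at least half of
  them; by independence this costs a power of the per-block failure probability.\<close>
lemma prob_median_grp_T_lt_half_le:
  fixes G :: "nat \<Rightarrow> nat set" and T :: "'a \<Rightarrow> real"
  assumes "0 < k" and G_sub: "\<And>j. j < k \<Longrightarrow> G j \<subseteq> {0..<n}" and G_card: "\<And>j. j < k \<Longrightarrow> card (G j) = m"
    and G_disj: "disjoint_family_on G {..<k}" and "0 < m"
    and tr: "0 < var_trace" and c: "0 < c" "c < 1/2"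
    and median: "\<And>\<omega> y. \<omega> \<in> space M \<Longrightarrow>
      (\<Sum>j<k. \<bar>T \<omega> - grp_T Xs (G j) \<omega>\<bar>) \<le> (\<Sum>j<k. \<bar>y - grp_T Xs (G j) \<omega>\<bar>)"
  shows "prob {\<omega> \<in> space M. T \<omega> < var_trace / 2}
    \<le> real (k choose ((k + 1) div 2))
       * (((fourth_moment - var_trace\<^sup>2) / var_trace\<^sup>2) / (c\<^sup>2 * real m) + 1 / ((1/2 - c) * real m))
         ^ ((k + 1) div 2)"
proof (rule prob_le_choose_mult_power)
  define F where "F j = {\<omega> \<in> space M. grp_T Xs (G j) \<omega> < var_trace / 2}" for j
  show "indep_events F {..<k}"
    unfolding F_def using indep_vars_grp_T[OF Xs_indep G_sub G_disj]
    by (intro indep_eventsI_indep_vars) auto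
  show "prob (F j) \<le> ((fourth_moment - var_trace\<^sup>2) / var_trace\<^sup>2) / (c\<^sup>2 * real m) + 1 / ((1/2 - c) * real m)"
    if "j < k" for j
    using prob_block_grp_T_lt_half_le[OF G_sub[OF that] _ tr c] G_card[OF that] \<open>0 < m\<close>
    unfolding F_def by fastforce
  show "1 \<le> (k + 1) div 2" using \<open>0 < k\<close> by simp
  fix \<omega> assume "\<omega> \<in> {\<omega> \<in> space M. T \<omega> < var_trace / 2}"
  then have \<omega>: "\<omega> \<in> space M" "T \<omega> < var_trace / 2" by auto
  have "k \<le> 2 * card {j. j < k \<and> grp_T Xs (G j) \<omega> \<le> T \<omega>}"
    by (rule median_half_below) (rule median[OF \<omega>(1)])
  moreover have "card {j. j < k \<and> grp_T Xs (G j) \<omega> \<le> T \<omega>} \<le> card {j. j < k \<and> \<omega> \<in> F j}"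
    using \<omega> by (intro card_mono) (auto simp: F_def)
  ultimately show "(k + 1) div 2 \<le> card {j. j < k \<and> \<omega> \<in> F j}" by linarith
qed

end

theorem mainTheorem8:
  fixes M :: "'a measure"
    and X :: "'a \<Rightarrow> 'h::{real_inner, complete_space, second_countable_topology}"
    and Xs :: "nat \<Rightarrow> 'a \<Rightarrow> 'h"
    and n :: nat and \<delta> :: real
    and G :: "nat \<Rightarrow> nat set"
    and That :: "'a \<Rightarrow> real"
  assumes P: "prob_space M"
    and X_meas: "X \<in> borel_measurable M"
    and X_int: "integrable M X"
    and X_4: "integrable M (\<lambda>\<omega>. (norm (X \<omega> - integral\<^sup>L M X)) ^ 4)"
    and tr_pos: "0 < integral\<^sup>L M (\<lambda>\<omega>. (norm (X \<omega> - integral\<^sup>L M X))\<^sup>2)"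
    and Xs_meas: "\<And>i. i < n \<Longrightarrow> Xs i \<in> borel_measurable M"
    and Xs_distr: "\<And>i. i < n \<Longrightarrow> distr M borel (Xs i) = distr M borel X"
    and Xs_indep: "prob_space.indep_vars M (\<lambda>_. borel) Xs {0..<n}"
    and \<delta>_pos: "0 < \<delta>" and \<delta>_lt1: "\<delta> < 1"
    and k_le: "real (n_blocks \<delta>) \<le> real n / 2"
    and G_sub: "\<And>j. j < n_blocks \<delta> \<Longrightarrow> G j \<subseteq> {0..<n}"
    and G_card: "\<And>j. j < n_blocks \<delta> \<Longrightarrow> card (G j) = n div n_blocks \<delta>"
    and G_disj: "\<And>j j'. j < n_blocks \<delta> \<Longrightarrow> j' < n_blocks \<delta> \<Longrightarrow> j \<noteq> j' \<Longrightarrow> G j \<inter> G j' = {}"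
    and That_meas: "That \<in> borel_measurable M"
    and That_median: "\<And>\<omega> y. \<omega> \<in> space M \<Longrightarrow>
        (\<Sum>j<n_blocks \<delta>. \<bar>That \<omega> - grp_T Xs (G j) \<omega>\<bar>) \<le> (\<Sum>j<n_blocks \<delta>. \<bar>y - grp_T Xs (G j) \<omega>\<bar>)"
    and cond: "15.2 * sqrt ((integral\<^sup>L M (\<lambda>\<omega>. (norm (X \<omega> - integral\<^sup>L M X)) ^ 4)
                   - (integral\<^sup>L M (\<lambda>\<omega>. (norm (X \<omega> - integral\<^sup>L M X))\<^sup>2))\<^sup>2)
                 / (integral\<^sup>L M (\<lambda>\<omega>. (norm (X \<omega> - integral\<^sup>L M X))\<^sup>2))\<^sup>2)
             \<le> (1/2 - 178 * ln (1.4 / \<delta>) / real n) * sqrt (real n / ln (1.4 / \<delta>))"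
  shows "measure M {\<omega> \<in> space M. integral\<^sup>L M (\<lambda>\<omega>. (norm (X \<omega> - integral\<^sup>L M X))\<^sup>2) \<le> 2 * That \<omega>} \<ge> 1 - \<delta>"
proof -
  interpret iid_sample M X Xs n
    using P X_meas X_int X_4 Xs_meas Xs_distr Xs_indep by (simp add: iid_sample_def iid_sample_axioms_def)
  define k where "k = n_blocks \<delta>"
  define s where "s = (k + 1) div 2"
  define \<kappa> where "\<kappa> = (fourth_moment - var_trace\<^sup>2) / var_trace\<^sup>2"
  define q where "q = \<kappa> / ((3/10)\<^sup>2 * real (n div k)) + 1 / ((1/2 - 3/10) * real (n div k))"
  have "0 < k" "k \<le> n" using k_le unfolding k_def n_blocks_def by linarith+
  then have "0 < n div k" by (simp add: div_greater_zero_iff)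
  have "0 \<le> \<kappa>" unfolding \<kappa>_def using var_trace_sq_le_fourth_moment by simp
  then have q: "0 \<le> q" "q \<le> 1/8"
    using \<open>0 < n div k\<close> group_size_bound[OF \<delta>_pos \<delta>_lt1 _ k_le cond[folded \<kappa>_def]]
    unfolding q_def k_def by simp_all
  have "disjoint_family_on G {..<k}" unfolding disjoint_family_on_def k_def using G_disj by auto
  then have "prob {\<omega> \<in> space M. That \<omega> < var_trace / 2} \<le> real (k choose s) * q ^ s"
    unfolding s_def q_def \<kappa>_def
    using G_sub G_card That_median \<open>0 < k\<close> \<open>0 < n div k\<close> tr_pos
    by (intro prob_median_grp_T_lt_half_le[where m = "n div k"]) (auto simp: k_def)
  also have "\<dots> \<le> \<delta>"
    using n_blocks_psi_bounds(1)[OF \<delta>_pos \<delta>_lt1] psi_bounds(3) q \<delta>_pos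
    by (intro choose_mult_power_le[where \<psi> = "psi (7/18) (1/10)"]) (auto simp: s_def k_def)
  finally have "prob {\<omega> \<in> space M. That \<omega> < var_trace / 2} \<le> \<delta>" .
  moreover have "{\<omega> \<in> space M. var_trace \<le> 2 * That \<omega>} = space M - {\<omega> \<in> space M. That \<omega> < var_trace / 2}"
    by auto
  moreover have "{\<omega> \<in> space M. That \<omega> < var_trace / 2} \<in> events" using That_meas by measurable
  ultimately show ?thesis using prob_compl by simp
qed

end
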